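(* Let $a,b\ge1$ be integers with $|a-b|\le4$ and let $n=a+b+2$. Then $\operatorname{diam}(\mathcal{C}_3(S(a,b)))=\lfloor 3n/2\rfloor$.
   Context: The double star $S(a,b)$ is the tree obtained by joining the centers of the stars $K_{1,a}$ and $K_{1,b}$ by an edge; it has $a+b+2$ vertices. A proper 3-coloring of a tree $T=(V,E)$ is a map $f\colon V\to\mathbb{Z}/3\mathbb{Z}$ with $f(u)\neq f(v)$ for every edge $uv\in E$. The 3-coloring graph $\mathcal{C}_3(T)$ has the proper 3-colorings as vertices, two colorings adjacent iff they differ at exactly one vertex; $\operatorname{diam}$ denotes graph diameter. *)

theory Defs
  imports Main "HOL-Library.Extended_Nat"
begin

text \<open>A graph is given by a vertex set V and an edge predicate E (on V).
  Proper 3-colourings are maps V \<rightarrow> {0,1,2}; to make them unique as HOL functions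
  we require them to be 0 outside V.\<close>

definition proper_3col :: "'v set \<Rightarrow> ('v \<Rightarrow> 'v \<Rightarrow> bool) \<Rightarrow> ('v \<Rightarrow> nat) \<Rightarrow> bool" where
  "proper_3col V E f \<longleftrightarrow>
     (\<forall>v\<in>V. f v < 3) \<and> (\<forall>v. v \<notin> V \<longrightarrow> f v = 0) \<and>
     (\<forall>u\<in>V. \<forall>v\<in>V. E u v \<longrightarrow> f u \<noteq> f v)"

definition col_adj :: "'v set \<Rightarrow> ('v \<Rightarrow> 'v \<Rightarrow> bool) \<Rightarrow> ('v \<Rightarrow> nat) \<Rightarrow> ('v \<Rightarrow> nat) \<Rightarrow> bool" where
  "col_adj V E f g \<longleftrightarrow> proper_3col V E f \<and> proper_3col V E g \<and>
     card {v\<in>V. f v \<noteq> g v} = 1"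

definition col_walk :: "'v set \<Rightarrow> ('v \<Rightarrow> 'v \<Rightarrow> bool) \<Rightarrow> ('v \<Rightarrow> nat) list \<Rightarrow> bool" where
  "col_walk V E ps \<longleftrightarrow> ps \<noteq> [] \<and> (\<forall>i. Suc i < length ps \<longrightarrow> col_adj V E (ps ! i) (ps ! Suc i))
      \<and> (\<forall>p\<in>set ps. proper_3col V E p)"

text \<open>Graph distance in the 3-colouring graph (\<infinity> if not connected).\<close>
definition col_dist :: "'v set \<Rightarrow> ('v \<Rightarrow> 'v \<Rightarrow> bool) \<Rightarrow> ('v \<Rightarrow> nat) \<Rightarrow> ('v \<Rightarrow> nat) \<Rightarrow> enat" where
  "col_dist V E f g = (INF ps \<in> {ps. col_walk V E ps \<and> hd ps = f \<and> last ps = g}.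
                          enat (length ps - 1))"

definition col_diam :: "'v set \<Rightarrow> ('v \<Rightarrow> 'v \<Rightarrow> bool) \<Rightarrow> enat" where
  "col_diam V E = (SUP p \<in> {(f, g). proper_3col V E f \<and> proper_3col V E g}.
                      col_dist V E (fst p) (snd p))"

text \<open>Double star S(a,b) on vertices {0,...,a+b+1}: centres 0 and 1 joined by an edge;
  leaves 2..a+1 attached to 0, leaves a+2..a+b+1 attached to 1.\<close>
definition dstar_V :: "nat \<Rightarrow> nat \<Rightarrow> nat set" where
  "dstar_V a b = {0..a+b+1}"

definition dstar_E0 :: "nat \<Rightarrow> nat \<Rightarrow> nat \<Rightarrow> nat \<Rightarrow> bool" where
  "dstar_E0 a b u v \<longleftrightarrow> (u = 0 \<and> v = 1) \<or> (u = 0 \<and> 2 \<le> v \<and> v \<le> a + 1)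
      \<or> (u = 1 \<and> a + 2 \<le> v \<and> v \<le> a + b + 1)"

definition dstar_E :: "nat \<Rightarrow> nat \<Rightarrow> nat \<Rightarrow> nat \<Rightarrow> bool" where
  "dstar_E a b u v \<longleftrightarrow> dstar_E0 a b u v \<or> dstar_E0 a b v u"

end

theory Submission
  imports Defs
begin

(* The six proper colourings of the centre edge form a hexagon whose neighbours differ at one
   centre, and a recolouring sequence moves the centre pair along a walk in it. Along a given
   route of the centre pair, a leaf has to be recoloured whenever its centre is about to take the
   leaf's colour, and possibly once more at the end; doing exactly these recolourings realises the
   route cost, which is therefore an upper bound for the distance. Conversely, the cost of the
   cheaper of the two arcs from the current centre pair to the target one decreases by at most
   one per recolouring and vanishes at the target, so it is a lower bound.
   For centre pairs at hexagon distance 2 or 3 the two arcs cost at most 6 + 3(a + b) together;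
   for adjacent centre pairs the direct move costs at most 1 + 2a + b or 1 + a + 2b, which is
   where |a - b| <= 4 enters. In the extremal pair, about half of the leaves move twice along
   either arc. *)

section \<open>Walks in the colouring graph\<close>

lemma col_walk_Cons:
  "col_walk V E (h # ps) \<longleftrightarrow>
     (if ps = [] then proper_3col V E h else col_adj V E h (hd ps) \<and> col_walk V E ps)"
proof (cases ps)
  case (Cons x qs)
  have "(\<forall>i. Suc i < length (h # ps) \<longrightarrow> col_adj V E ((h # ps) ! i) ((h # ps) ! Suc i)) \<longleftrightarrow>
        col_adj V E h x \<and> (\<forall>i. Suc i < length ps \<longrightarrow> col_adj V E (ps ! i) (ps ! Suc i))"
    using Cons by (auto simp: less_Suc_eq_0_disj)
  then show ?thesis
    using Cons by (auto simp: col_walk_def col_adj_def)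
qed (simp add: col_walk_def)

definition col_reach :: "'v set \<Rightarrow> ('v \<Rightarrow> 'v \<Rightarrow> bool) \<Rightarrow> ('v \<Rightarrow> nat) \<Rightarrow> ('v \<Rightarrow> nat) \<Rightarrow> nat \<Rightarrow> bool" where
  "col_reach V E h h' k \<longleftrightarrow> (\<exists>ps. col_walk V E ps \<and> hd ps = h \<and> last ps = h' \<and> length ps = Suc k)"

lemma col_reach_0: "proper_3col V E h \<Longrightarrow> col_reach V E h h 0"
  unfolding col_reach_def by (intro exI[of _ "[h]"]) (simp add: col_walk_Cons)

lemma col_reach_0_eq: "col_reach V E h h' 0 \<Longrightarrow> h' = h"
  unfolding col_reach_def by (auto simp: length_Suc_conv)

lemma col_reach_Suc_iff:
  "col_reach V E h h' (Suc k) \<longleftrightarrow> (\<exists>x. col_adj V E h x \<and> col_reach V E x h' k)"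
proof
  assume "col_reach V E h h' (Suc k)"
  then obtain x ps where "col_walk V E (h # x # ps)" "last (x # ps) = h'" "length ps = k"
    unfolding col_reach_def by (auto simp: length_Suc_conv)
  then show "\<exists>x. col_adj V E h x \<and> col_reach V E x h' k"
    unfolding col_reach_def by (intro exI[of _ x] conjI exI[of _ "x # ps"]) (auto simp: col_walk_Cons)
next
  assume "\<exists>x. col_adj V E h x \<and> col_reach V E x h' k"
  then obtain ps where "col_adj V E h (hd ps)" "col_walk V E ps" "last ps = h'" "length ps = Suc k"
    unfolding col_reach_def by blast
  then show "col_reach V E h h' (Suc k)"
    unfolding col_reach_def by (intro exI[of _ "h # ps"]) (auto simp: col_walk_Cons)
qed

lemma col_reach_trans:
  "col_reach V E h1 h2 k \<Longrightarrow> col_reach V E h2 h3 l \<Longrightarrow> col_reach V E h1 h3 (k + l)"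
  by (induction k arbitrary: h1) (auto simp: col_reach_Suc_iff dest: col_reach_0_eq)

lemma col_dist_le_reach: "col_reach V E h h' k \<Longrightarrow> col_dist V E h h' \<le> enat k"
  unfolding col_reach_def col_dist_def by (auto intro!: INF_lower2)

lemma col_adj_fun_upd:
  assumes "proper_3col V E h" "proper_3col V E (h(v := x))" "v \<in> V" "h v \<noteq> x"
  shows "col_adj V E h (h(v := x))"
proof -
  have "{u \<in> V. h u \<noteq> (h(v := x)) u} = {v}"
    using assms(3,4) by auto
  then show ?thesis
    using assms(1,2) by (simp add: col_adj_def)
qed

lemma proper_3col_diff_subset:
  "proper_3col V E h \<Longrightarrow> proper_3col V E h' \<Longrightarrow> {v. h v \<noteq> h' v} \<subseteq> V"
  unfolding proper_3col_def by (metis (mono_tags) mem_Collect_eq subsetI)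

lemma proper_3col_fun_upd_independent_diff:
  assumes h: "proper_3col V E h" and h': "proper_3col V E h'"
    and indep: "\<And>u w. h u \<noteq> h' u \<Longrightarrow> h w \<noteq> h' w \<Longrightarrow> \<not> E u w"
  shows "proper_3col V E (h(v := h' v))"
  unfolding proper_3col_def
proof (intro conjI ballI allI impI)
  fix u assume "u \<in> V"
  then show "(h(v := h' v)) u < 3"
    using h h' by (auto simp: proper_3col_def)
next
  fix u assume "u \<notin> V"
  then show "(h(v := h' v)) u = 0"
    using h h' by (auto simp: proper_3col_def)
next
  fix u w assume uw: "u \<in> V" "w \<in> V" "E u w"
  then have "h u \<noteq> h w" "h' u \<noteq> h' w" "h u = h' u \<or> h w = h' w"
    using h h' indep by (auto simp: proper_3col_def)
  then show "(h(v := h' v)) u \<noteq> (h(v := h' v)) w"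
    by auto
qed

lemma col_reach_independent_diff:
  assumes "finite V" "proper_3col V E h" "proper_3col V E h'"
    and "\<And>u v. h u \<noteq> h' u \<Longrightarrow> h v \<noteq> h' v \<Longrightarrow> \<not> E u v"
  shows "col_reach V E h h' (card {v. h v \<noteq> h' v})"
  using assms(2,4)
proof (induction "card {v. h v \<noteq> h' v}" arbitrary: h)
  case 0
  have "{v. h v \<noteq> h' v} \<subseteq> V"
    using "0.prems"(1) assms(3) by (rule proper_3col_diff_subset)
  then have "h = h'"
    using "0.hyps" finite_subset[OF _ assms(1)] by auto
  then show ?case
    using "0.hyps" col_reach_0[OF assms(3)] by simp
next
  case (Suc k)
  have diff: "{v. h v \<noteq> h' v} \<subseteq> V"
    using Suc.prems(1) assms(3) by (rule proper_3col_diff_subset)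
  obtain v where v: "h v \<noteq> h' v"
    using Suc.hyps(2) by (metis (mono_tags) Collect_empty_eq card.empty nat.distinct(1))
  define h2 where "h2 = h(v := h' v)"
  have h2: "proper_3col V E h2"
    unfolding h2_def using Suc.prems(1) assms(3) Suc.prems(2) by (rule proper_3col_fun_upd_independent_diff)
  then have "col_adj V E h h2"
    unfolding h2_def using diff v Suc.prems(1) by (intro col_adj_fun_upd) auto
  moreover have "col_reach V E h2 h' k"
  proof -
    have "{u. h2 u \<noteq> h' u} = {u. h u \<noteq> h' u} - {v}"
      by (auto simp: h2_def)
    then have "card {u. h2 u \<noteq> h' u} = k"
      using Suc.hyps(2) finite_subset[OF diff assms(1)] v by simp
    moreover have "\<not> E u w" if "h2 u \<noteq> h' u" "h2 w \<noteq> h' w" for u w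
      using that Suc.prems(2) by (auto simp: h2_def split: if_splits)
    ultimately show ?thesis
      using Suc.hyps(1)[of h2] h2 by simp
  qed
  ultimately show ?case
    using Suc.hyps(2) col_reach_Suc_iff by metis
qed

lemma col_dist_ge_potential:
  fixes \<phi> :: "('v \<Rightarrow> nat) \<Rightarrow> nat"
  assumes lipschitz: "\<And>h h'. col_adj V E h h' \<Longrightarrow> \<phi> h \<le> Suc (\<phi> h')" and "\<phi> g = 0"
  shows "enat (\<phi> f) \<le> col_dist V E f g"
proof -
  have walk: "\<phi> (hd ps) \<le> (length ps - 1) + \<phi> (last ps)" if "col_walk V E ps" for ps
    using that
  proof (induction ps rule: induct_list012)
    case (3 h x qs)
    then have "\<phi> h \<le> Suc (\<phi> x)" "\<phi> x \<le> length qs + \<phi> (last (x # qs))"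
      using lipschitz by (auto simp: col_walk_Cons)
    then show ?case
      by simp
  qed (simp_all add: col_walk_def)
  show ?thesis
    unfolding col_dist_def
  proof (rule INF_greatest)
    fix ps assume "ps \<in> {ps. col_walk V E ps \<and> hd ps = f \<and> last ps = g}"
    then show "enat (\<phi> f) \<le> enat (length ps - 1)"
      using walk[of ps] \<open>\<phi> g = 0\<close> by auto
  qed
qed

lemma less_3_cases: "(s::nat) < 3 \<Longrightarrow> s = 0 \<or> s = 1 \<or> s = 2"
  by auto

lemma third_colour:
  "x < 3 \<Longrightarrow> y < 3 \<Longrightarrow> z < 3 \<Longrightarrow> w < 3 \<Longrightarrow> x \<noteq> y \<Longrightarrow> x \<noteq> z \<Longrightarrow> y \<noteq> z \<Longrightarrow>
   w \<noteq> x \<Longrightarrow> w \<noteq> y \<Longrightarrow> w = (z::nat)"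
  by arith

lemma card_filter_eq_sum_of_bool: "finite A \<Longrightarrow> card {x \<in> A. P x} = (\<Sum>x\<in>A. of_bool (P x))"
  by (simp add: sum_of_bool_eq Int_def)

lemma card_initial_segment: "k \<le> m \<Longrightarrow> card {v \<in> {2..m+1}. v \<le> k + 1} = (k::nat)"
proof -
  assume "k \<le> m"
  then have "{v \<in> {2..m+1}. v \<le> k + 1} = {2..k+1}"
    by auto
  then show ?thesis
    by simp
qed

lemma sum_le_card_mult: "(\<And>x. x \<in> A \<Longrightarrow> f x \<le> (K::nat)) \<Longrightarrow> sum f A \<le> K * card A"
  using sum_bounded_above[of A f K] by (simp add: mult.commute)

lemma sum_le_sum_plus_of_bool:
  assumes "finite A" "\<And>u. u \<in> A \<Longrightarrow> u \<noteq> v \<Longrightarrow> f u \<le> g u" "f v \<le> Suc (g v)"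
  shows "sum f A \<le> sum g A + of_bool (v \<in> A)"
proof -
  have "sum f A \<le> (\<Sum>u\<in>A. g u + of_bool (u = v))"
    using assms(2,3) by (intro sum_mono) auto
  also have "\<dots> = sum g A + of_bool (v \<in> A)"
    using assms(1) by (simp add: sum.distrib of_bool_def sum.delta')
  finally show ?thesis .
qed

section \<open>The hexagon of centre colourings\<close>

definition centre_col :: "nat \<times> nat \<Rightarrow> bool" where
  "centre_col c \<longleftrightarrow> fst c < 3 \<and> snd c < 3 \<and> fst c \<noteq> snd c"

lemma centre_col_cases:
  "centre_col c \<Longrightarrow> c = (0,1) \<or> c = (0,2) \<or> c = (1,2) \<or> c = (1,0) \<or> c = (2,0) \<or> c = (2,1)"
  by (cases c) (auto simp: centre_col_def less_Suc_eq numeral_eq_Suc)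

definition hexagon :: "(nat \<times> nat) list" where
  "hexagon = [(0,1), (0,2), (1,2), (1,0), (2,0), (2,1)]"

definition hex_pos :: "nat \<times> nat \<Rightarrow> nat" where
  "hex_pos c = (if c = (0,1) then 0 else if c = (0,2) then 1 else if c = (1,2) then 2 else
                if c = (1,0) then 3 else if c = (2,0) then 4 else 5)"

definition hex_step :: "bool \<Rightarrow> nat \<times> nat \<Rightarrow> nat \<times> nat" where
  "hex_step fwd c = hexagon ! ((hex_pos c + (if fwd then 1 else 5)) mod 6)"

definition hex_adj :: "nat \<times> nat \<Rightarrow> nat \<times> nat \<Rightarrow> bool" where
  "hex_adj c d \<longleftrightarrow> d = hex_step True c \<or> d = hex_step False c"

fun hex_walk :: "(nat \<times> nat) list \<Rightarrow> bool" where
  "hex_walk [] = False"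
| "hex_walk [c] = centre_col c"
| "hex_walk (c # d # cs) = (centre_col c \<and> hex_adj c d \<and> hex_walk (d # cs))"

fun hex_iter :: "bool \<Rightarrow> nat \<Rightarrow> nat \<times> nat \<Rightarrow> (nat \<times> nat) list" where
  "hex_iter fwd 0 c = [c]"
| "hex_iter fwd (Suc k) c = c # hex_iter fwd k (hex_step fwd c)"

lemma hex_iter_numeral [simp]:
  "hex_iter fwd (numeral k) c = c # hex_iter fwd (pred_numeral k) (hex_step fwd c)"
  by (simp add: numeral_eq_Suc)

lemma hex_iter_not_Nil [simp]: "hex_iter fwd k c \<noteq> []"
  by (cases k) simp_all

definition arc :: "bool \<Rightarrow> nat \<times> nat \<Rightarrow> nat \<times> nat \<Rightarrow> (nat \<times> nat) list" where
  "arc fwd c T = hex_iter fwd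
     ((if fwd then hex_pos T + 6 - hex_pos c else hex_pos c + 6 - hex_pos T) mod 6) c"

lemmas hexagon_simps = centre_col_def hexagon_def hex_pos_def hex_step_def hex_adj_def arc_def

lemma hex_step_centre_col: "centre_col c \<Longrightarrow> centre_col (hex_step fwd c)"
  by (drule centre_col_cases, elim disjE) (simp_all add: hexagon_simps)

lemma hex_step_inverse: "centre_col c \<Longrightarrow> hex_step (\<not> fwd) (hex_step fwd c) = c"
  by (cases fwd; drule centre_col_cases, elim disjE) (simp_all add: hexagon_simps)

lemma hex_adj_iff:
  "centre_col c \<Longrightarrow> centre_col d \<Longrightarrow>
   hex_adj c d \<longleftrightarrow> (fst d \<noteq> fst c \<and> snd d = snd c) \<or> (fst d = fst c \<and> snd d \<noteq> snd c)"
  by (drule centre_col_cases, drule centre_col_cases, elim disjE) (simp_all add: hexagon_simps)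

lemma arc_not_Nil [simp]: "arc fwd c T \<noteq> []"
  by (simp add: arc_def)

lemma arc_self [simp]: "arc fwd T T = [T]"
  by (simp add: arc_def)

lemma arc_Cons:
  "centre_col c \<Longrightarrow> centre_col T \<Longrightarrow> c \<noteq> T \<Longrightarrow> arc fwd c T = c # arc fwd (hex_step fwd c) T"
  by (cases fwd; drule centre_col_cases, drule centre_col_cases, elim disjE) (simp_all add: hexagon_simps)

lemma hex_walk_arc:
  "centre_col c \<Longrightarrow> centre_col T \<Longrightarrow>
   hex_walk (arc fwd c T) \<and> hd (arc fwd c T) = c \<and> last (arc fwd c T) = T"
  by (cases fwd; drule centre_col_cases, drule centre_col_cases, elim disjE) (simp_all add: hexagon_simps)

lemma length_arcs_far:
  "centre_col c \<Longrightarrow> centre_col T \<Longrightarrow> c \<noteq> T \<Longrightarrow> \<not> hex_adj c T \<Longrightarrow>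
   length (arc True c T) + length (arc False c T) = 8"
  by (drule centre_col_cases, drule centre_col_cases, elim disjE) (simp_all add: hexagon_simps)

lemma arcs_01_12:
  "arc True (0,1) (1,2) = [(0,1), (0,2), (1,2)]"
  "arc False (0,1) (1,2) = [(0,1), (2,1), (2,0), (1,0), (1,2)]"
  by (simp_all add: hexagon_simps)

text \<open>Recolourings of a leaf of the first centre, taken from colour s to colour t while the centre
  pair runs through cs: just before the first centre leaves fst c, the leaf is forced to snd c.
  Leaves of the second centre see the route through map prod.swap.\<close>
fun leaf_moves :: "(nat \<times> nat) list \<Rightarrow> nat \<Rightarrow> nat \<Rightarrow> nat" where
  "leaf_moves [] s t = 0"
| "leaf_moves [c] s t = of_bool (s \<noteq> t)"
| "leaf_moves (c # d # cs) s t =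
     (if fst c = fst d then leaf_moves (d # cs) s t
      else of_bool (s \<noteq> snd c) + leaf_moves (d # cs) (snd c) t)"

lemma leaf_moves_le_Suc: "leaf_moves cs s t \<le> Suc (leaf_moves cs s' t)"
  by (induction cs s t arbitrary: s' rule: leaf_moves.induct) auto

lemma of_bool_le_leaf_moves: "cs \<noteq> [] \<Longrightarrow> of_bool (s \<noteq> t) \<le> leaf_moves cs s t"
  by (induction cs s t rule: leaf_moves.induct) (auto intro: le_trans[OF _ leaf_moves_le_Suc])

lemma leaf_moves_Cons_skip:
  "s \<noteq> fst d \<Longrightarrow> fst c = fst d \<or> s = snd c \<Longrightarrow> leaf_moves (c # d # cs) s t = leaf_moves (d # cs) s t"
  by auto

lemma leaf_moves_arcs_far:
  "centre_col c \<Longrightarrow> centre_col T \<Longrightarrow> c \<noteq> T \<Longrightarrow> \<not> hex_adj c T \<Longrightarrow>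
   s < 3 \<Longrightarrow> t < 3 \<Longrightarrow> s \<noteq> fst c \<Longrightarrow> t \<noteq> fst T \<Longrightarrow>
   leaf_moves (arc True c T) s t + leaf_moves (arc False c T) s t \<le> 3"
  by (drule centre_col_cases, drule centre_col_cases, drule less_3_cases, drule less_3_cases, elim disjE)
    (simp_all add: hexagon_simps)

lemma leaf_moves_swap_arcs_far:
  "centre_col c \<Longrightarrow> centre_col T \<Longrightarrow> c \<noteq> T \<Longrightarrow> \<not> hex_adj c T \<Longrightarrow>
   s < 3 \<Longrightarrow> t < 3 \<Longrightarrow> s \<noteq> snd c \<Longrightarrow> t \<noteq> snd T \<Longrightarrow>
   leaf_moves (map prod.swap (arc True c T)) s t + leaf_moves (map prod.swap (arc False c T)) s t \<le> 3"
  by (drule centre_col_cases, drule centre_col_cases, drule less_3_cases, drule less_3_cases, elim disjE)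
    (simp_all add: hexagon_simps)

definition centre :: "(nat \<Rightarrow> nat) \<Rightarrow> nat \<times> nat" where
  "centre h = (h 0, h 1)"

context
  fixes a b :: nat
begin

abbreviation dstar_proper :: "(nat \<Rightarrow> nat) \<Rightarrow> bool" where
  "dstar_proper h \<equiv> proper_3col (dstar_V a b) (dstar_E a b) h"

definition leaves0 :: "nat set" where
  "leaves0 = {2..a+1}"

definition leaves1 :: "nat set" where
  "leaves1 = {a+2..a+b+1}"

lemma finite_leaves [simp]: "finite leaves0" "finite leaves1"
  by (simp_all add: leaves0_def leaves1_def)

lemma card_leaves [simp]: "card leaves0 = a" "card leaves1 = b"
  by (simp_all add: leaves0_def leaves1_def)

lemma mem_leaves_iff:
  "v \<in> leaves0 \<longleftrightarrow> 2 \<le> v \<and> v \<le> a+1"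
  "v \<in> leaves1 \<longleftrightarrow> a+2 \<le> v \<and> v \<le> a+b+1"
  by (simp_all add: leaves0_def leaves1_def)

lemma sum_leaves: "sum F leaves0 + sum F leaves1 = sum F {2..a+b+1}"
proof -
  have "{2..a+b+1} = leaves0 \<union> leaves1" "leaves0 \<inter> leaves1 = {}"
    by (auto simp: mem_leaves_iff)
  then show ?thesis
    by (simp add: sum.union_disjoint)
qed

lemma dstar_proper_iff:
  "dstar_proper h \<longleftrightarrow> (\<forall>v \<le> a+b+1. h v < 3) \<and> (\<forall>v > a+b+1. h v = 0) \<and> h 0 \<noteq> h 1 \<and>
     (\<forall>v\<in>leaves0. h v \<noteq> h 0) \<and> (\<forall>v\<in>leaves1. h v \<noteq> h 1)"
  (is "_ \<longleftrightarrow> ?colours \<and> ?outside \<and> ?edges")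
proof -
  have V: "v \<in> dstar_V a b \<longleftrightarrow> v \<le> a+b+1" for v
    by (simp add: dstar_V_def)
  have E: "dstar_E a b u v \<longleftrightarrow> (u = 0 \<and> v = 1) \<or> (u = 1 \<and> v = 0) \<or> (u = 0 \<and> v \<in> leaves0)
             \<or> (v = 0 \<and> u \<in> leaves0) \<or> (u = 1 \<and> v \<in> leaves1) \<or> (v = 1 \<and> u \<in> leaves1)" for u v
    unfolding dstar_E_def dstar_E0_def mem_leaves_iff by auto
  have colours: "(\<forall>v\<in>dstar_V a b. h v < 3) \<longleftrightarrow> ?colours"
    by (auto simp: V)
  have outside: "(\<forall>v. v \<notin> dstar_V a b \<longrightarrow> h v = 0) \<longleftrightarrow> ?outside"
    by (simp add: V not_le)
  have edges: "(\<forall>u\<in>dstar_V a b. \<forall>v\<in>dstar_V a b. dstar_E a b u v \<longrightarrow> h u \<noteq> h v) \<longleftrightarrow> ?edges"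
  proof
    assume H: "\<forall>u\<in>dstar_V a b. \<forall>v\<in>dstar_V a b. dstar_E a b u v \<longrightarrow> h u \<noteq> h v"
    show ?edges
    proof (intro conjI ballI)
      show "h 0 \<noteq> h 1"
        using H[rule_format, of 0 1] by (simp add: V E)
    next
      fix v assume "v \<in> leaves0"
      then show "h v \<noteq> h 0"
        using H[rule_format, of v 0] by (simp add: V E mem_leaves_iff)
    next
      fix v assume "v \<in> leaves1"
      then show "h v \<noteq> h 1"
        using H[rule_format, of v 1] by (simp add: V E mem_leaves_iff)
    qed
  next
    assume ?edges
    then show "\<forall>u\<in>dstar_V a b. \<forall>v\<in>dstar_V a b. dstar_E a b u v \<longrightarrow> h u \<noteq> h v"
      unfolding E by auto
  qed
  show ?thesis
    unfolding proper_3col_def using colours outside edges by blast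
qed

lemma centre_col_centre: "dstar_proper h \<Longrightarrow> centre_col (centre h)"
  by (simp add: dstar_proper_iff centre_col_def centre_def)

lemma hex_adj_centre:
  assumes "dstar_proper h" "dstar_proper h'" "h 0 = h' 0 \<or> h 1 = h' 1" "centre h \<noteq> centre h'"
  shows "hex_adj (centre h) (centre h')"
proof -
  have "(h' 0 \<noteq> h 0 \<and> h' 1 = h 1) \<or> (h' 0 = h 0 \<and> h' 1 \<noteq> h 1)"
    using assms(3,4) by (auto simp: centre_def)
  then show ?thesis
    using hex_adj_iff[OF centre_col_centre[OF assms(1)] centre_col_centre[OF assms(2)]]
    by (simp add: centre_def)
qed

lemma col_reach_recolour_leaves:
  assumes "dstar_proper h" "dstar_proper h'" "h 0 = h' 0" "h 1 = h' 1"
  shows "col_reach (dstar_V a b) (dstar_E a b) h h' (card {v. h v \<noteq> h' v})"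
  using assms
  by (intro col_reach_independent_diff) (auto simp: dstar_V_def dstar_E_def dstar_E0_def)

definition route_cost :: "(nat \<Rightarrow> nat) \<Rightarrow> (nat \<Rightarrow> nat) \<Rightarrow> (nat \<times> nat) list \<Rightarrow> nat" where
  "route_cost g h cs = (length cs - 1) + (\<Sum>v\<in>leaves0. leaf_moves cs (h v) (g v))
     + (\<Sum>v\<in>leaves1. leaf_moves (map prod.swap cs) (h v) (g v))"

lemma route_cost_single:
  "route_cost g h [c] = card {v \<in> leaves0. h v \<noteq> g v} + card {v \<in> leaves1. h v \<noteq> g v}"
  by (simp add: route_cost_def card_filter_eq_sum_of_bool)

section \<open>Upper bound\<close>

lemma card_diff_le_route_cost:
  assumes "dstar_proper h" "dstar_proper g" "h 0 = g 0" "h 1 = g 1"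
  shows "card {v. h v \<noteq> g v} \<le> route_cost g h [c]"
proof -
  let ?D0 = "{v \<in> leaves0. h v \<noteq> g v}" and ?D1 = "{v \<in> leaves1. h v \<noteq> g v}"
  have "{v. h v \<noteq> g v} \<subseteq> ?D0 \<union> ?D1"
  proof
    fix v assume v: "v \<in> {v. h v \<noteq> g v}"
    then have "v \<in> dstar_V a b"
      using proper_3col_diff_subset[OF assms(1,2)] by blast
    moreover have "v \<notin> {0, 1}"
      using v assms(3,4) by (intro notI) auto
    ultimately show "v \<in> ?D0 \<union> ?D1"
      using v unfolding dstar_V_def mem_leaves_iff by auto
  qed
  then have "card {v. h v \<noteq> g v} \<le> card (?D0 \<union> ?D1)"
    by (intro card_mono) simp_all
  also have "\<dots> \<le> route_cost g h [c]"
    unfolding route_cost_single by (rule card_Un_le)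
  finally show ?thesis .
qed

lemma col_reach_move_centre0:
  assumes h: "dstar_proper h" and x: "x < 3" "x \<noteq> h 0" "x \<noteq> h 1"
  defines "h' \<equiv> (\<lambda>v. if v \<in> leaves0 then h 1 else h v)(0 := x)"
  shows "dstar_proper h' \<and>
    col_reach (dstar_V a b) (dstar_E a b) h h' (Suc (card {v \<in> leaves0. h v \<noteq> h 1}))"
proof
  define h1 where "h1 = (\<lambda>v. if v \<in> leaves0 then h 1 else h v)"
  have h1: "dstar_proper h1"
    using h by (auto simp: dstar_proper_iff mem_leaves_iff h1_def)
  show h': "dstar_proper h'"
    using h x by (auto simp: dstar_proper_iff mem_leaves_iff h'_def)
  have "{v. h v \<noteq> h1 v} = {v \<in> leaves0. h v \<noteq> h 1}"
    by (auto simp: h1_def)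
  then have "col_reach (dstar_V a b) (dstar_E a b) h h1 (card {v \<in> leaves0. h v \<noteq> h 1})"
    using col_reach_recolour_leaves[OF h h1] by (simp add: h1_def mem_leaves_iff)
  moreover have "col_adj (dstar_V a b) (dstar_E a b) h1 h'"
    using h1 h' x unfolding h'_def h1_def[symmetric]
    by (intro col_adj_fun_upd) (auto simp: dstar_V_def mem_leaves_iff h1_def)
  then have "col_reach (dstar_V a b) (dstar_E a b) h1 h' 1"
    using col_reach_0[OF h'] col_reach_Suc_iff by (metis One_nat_def)
  ultimately show "col_reach (dstar_V a b) (dstar_E a b) h h' (Suc (card {v \<in> leaves0. h v \<noteq> h 1}))"
    using col_reach_trans by fastforce
qed

lemma col_reach_move_centre1:
  assumes h: "dstar_proper h" and x: "x < 3" "x \<noteq> h 0" "x \<noteq> h 1"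
  defines "h' \<equiv> (\<lambda>v. if v \<in> leaves1 then h 0 else h v)(1 := x)"
  shows "dstar_proper h' \<and>
    col_reach (dstar_V a b) (dstar_E a b) h h' (Suc (card {v \<in> leaves1. h v \<noteq> h 0}))"
proof
  define h1 where "h1 = (\<lambda>v. if v \<in> leaves1 then h 0 else h v)"
  have h1: "dstar_proper h1"
    using h by (auto simp: dstar_proper_iff mem_leaves_iff h1_def)
  show h': "dstar_proper h'"
    using h x by (auto simp: dstar_proper_iff mem_leaves_iff h'_def)
  have "{v. h v \<noteq> h1 v} = {v \<in> leaves1. h v \<noteq> h 0}"
    by (auto simp: h1_def)
  then have "col_reach (dstar_V a b) (dstar_E a b) h h1 (card {v \<in> leaves1. h v \<noteq> h 0})"
    using col_reach_recolour_leaves[OF h h1] by (simp add: h1_def mem_leaves_iff)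
  moreover have "col_adj (dstar_V a b) (dstar_E a b) h1 h'"
    using h1 h' x unfolding h'_def h1_def[symmetric]
    by (intro col_adj_fun_upd) (auto simp: dstar_V_def mem_leaves_iff h1_def)
  then have "col_reach (dstar_V a b) (dstar_E a b) h1 h' 1"
    using col_reach_0[OF h'] col_reach_Suc_iff by (metis One_nat_def)
  ultimately show "col_reach (dstar_V a b) (dstar_E a b) h h' (Suc (card {v \<in> leaves1. h v \<noteq> h 0}))"
    using col_reach_trans by fastforce
qed

lemma route_cost_move_centre0:
  assumes "centre h = c" "fst d \<noteq> fst c" "snd d = snd c"
  defines "h' \<equiv> (\<lambda>v. if v \<in> leaves0 then h 1 else h v)(0 := fst d)"
  shows "route_cost g h (c # d # cs) = Suc (card {v \<in> leaves0. h v \<noteq> h 1}) + route_cost g h' (d # cs)"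
proof -
  have "(\<Sum>v\<in>leaves0. leaf_moves (c # d # cs) (h v) (g v))
      = (\<Sum>v\<in>leaves0. of_bool (h v \<noteq> h 1) + leaf_moves (d # cs) (h' v) (g v))"
    using assms by (intro sum.cong) (auto simp: centre_def mem_leaves_iff)
  moreover have "(\<Sum>v\<in>leaves1. leaf_moves (map prod.swap (c # d # cs)) (h v) (g v))
      = (\<Sum>v\<in>leaves1. leaf_moves (map prod.swap (d # cs)) (h' v) (g v))"
    using assms by (intro sum.cong) (auto simp: mem_leaves_iff)
  ultimately show ?thesis
    by (simp add: route_cost_def sum.distrib card_filter_eq_sum_of_bool)
qed

lemma route_cost_move_centre1:
  assumes "centre h = c" "fst d = fst c" "snd d \<noteq> snd c"
  defines "h' \<equiv> (\<lambda>v. if v \<in> leaves1 then h 0 else h v)(1 := snd d)"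
  shows "route_cost g h (c # d # cs) = Suc (card {v \<in> leaves1. h v \<noteq> h 0}) + route_cost g h' (d # cs)"
proof -
  have "(\<Sum>v\<in>leaves1. leaf_moves (map prod.swap (c # d # cs)) (h v) (g v))
      = (\<Sum>v\<in>leaves1. of_bool (h v \<noteq> h 0) + leaf_moves (map prod.swap (d # cs)) (h' v) (g v))"
    using assms by (intro sum.cong) (auto simp: centre_def mem_leaves_iff)
  moreover have "(\<Sum>v\<in>leaves0. leaf_moves (c # d # cs) (h v) (g v))
      = (\<Sum>v\<in>leaves0. leaf_moves (d # cs) (h' v) (g v))"
    using assms by (intro sum.cong) (auto simp: mem_leaves_iff)
  ultimately show ?thesis
    by (simp add: route_cost_def sum.distrib card_filter_eq_sum_of_bool)
qed

lemma col_reach_route_step: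
  assumes h: "dstar_proper h" and adj: "hex_adj (centre h) d"
  obtains h' k where "dstar_proper h'" "col_reach (dstar_V a b) (dstar_E a b) h h' k" "centre h' = d"
    "route_cost g h (centre h # d # cs) = k + route_cost g h' (d # cs)"
proof -
  have c: "centre_col (centre h)"
    using h by (rule centre_col_centre)
  then have d: "centre_col d"
    using adj hex_step_centre_col unfolding hex_adj_def by blast
  consider "fst d \<noteq> h 0" "snd d = h 1" | "fst d = h 0" "snd d \<noteq> h 1"
    using hex_adj_iff[OF c d] adj by (auto simp: centre_def)
  then show ?thesis
  proof cases
    case 1
    define h' where "h' = (\<lambda>v. if v \<in> leaves0 then h 1 else h v)(0 := fst d)"
    have "fst d < 3" "fst d \<noteq> h 1"
      using d 1 by (auto simp: centre_col_def)
    then have "dstar_proper h'"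
      "col_reach (dstar_V a b) (dstar_E a b) h h' (Suc (card {v \<in> leaves0. h v \<noteq> h 1}))"
      using col_reach_move_centre0[OF h] 1 unfolding h'_def by blast+
    moreover have "centre h' = d"
      using 1 by (auto simp: h'_def centre_def mem_leaves_iff prod_eq_iff)
    moreover have "route_cost g h (centre h # d # cs)
        = Suc (card {v \<in> leaves0. h v \<noteq> h 1}) + route_cost g h' (d # cs)"
      unfolding h'_def using 1 by (intro route_cost_move_centre0) (simp_all add: centre_def)
    ultimately show ?thesis
      by (rule that)
  next
    case 2
    define h' where "h' = (\<lambda>v. if v \<in> leaves1 then h 0 else h v)(1 := snd d)"
    have "snd d < 3" "snd d \<noteq> h 0"
      using d 2 by (auto simp: centre_col_def)
    then have "dstar_proper h'"
      "col_reach (dstar_V a b) (dstar_E a b) h h' (Suc (card {v \<in> leaves1. h v \<noteq> h 0}))"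
      using col_reach_move_centre1[OF h] 2 unfolding h'_def by blast+
    moreover have "centre h' = d"
      using 2 by (auto simp: h'_def centre_def mem_leaves_iff prod_eq_iff)
    moreover have "route_cost g h (centre h # d # cs)
        = Suc (card {v \<in> leaves1. h v \<noteq> h 0}) + route_cost g h' (d # cs)"
      unfolding h'_def using 2 by (intro route_cost_move_centre1) (simp_all add: centre_def)
    ultimately show ?thesis
      by (rule that)
  qed
qed

lemma col_reach_route_cost:
  assumes "hex_walk cs" "dstar_proper h" "dstar_proper g" "hd cs = centre h" "last cs = centre g"
  shows "\<exists>k \<le> route_cost g h cs. col_reach (dstar_V a b) (dstar_E a b) h g k"
  using assms(1,2,4,5)
proof (induction cs arbitrary: h rule: hex_walk.induct)
  case (2 c)
  then have "h 0 = g 0" "h 1 = g 1"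
    by (simp_all add: centre_def)
  then show ?case
    using col_reach_recolour_leaves[OF "2.prems"(2) assms(3)]
      card_diff_le_route_cost[OF "2.prems"(2) assms(3)] by blast
next
  case (3 c d cs)
  then have h: "dstar_proper h" and c: "c = centre h" and adj: "hex_adj (centre h) d"
    by simp_all
  obtain h' k where h': "dstar_proper h'"
    and reach: "col_reach (dstar_V a b) (dstar_E a b) h h' k" and "centre h' = d"
    and cost: "route_cost g h (centre h # d # cs) = k + route_cost g h' (d # cs)"
    by (rule col_reach_route_step[OF h adj])
  obtain k' where "k' \<le> route_cost g h' (d # cs)" "col_reach (dstar_V a b) (dstar_E a b) h' g k'"
    using "3.IH" "3.prems" h' \<open>centre h' = d\<close> by auto
  then show ?case
    using c cost col_reach_trans[OF reach] by (intro exI[of _ "k + k'"]) auto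
qed simp

lemma col_dist_le_route_cost:
  "dstar_proper f \<Longrightarrow> dstar_proper g \<Longrightarrow> hex_walk cs \<Longrightarrow> hd cs = centre f \<Longrightarrow> last cs = centre g \<Longrightarrow>
   col_dist (dstar_V a b) (dstar_E a b) f g \<le> enat (route_cost g f cs)"
  using col_reach_route_cost col_dist_le_reach by (meson enat_ord_simps(1) order_trans)

lemma route_cost_single_le: "route_cost g h [c] \<le> a + b"
proof -
  have "card {v \<in> leaves0. h v \<noteq> g v} \<le> a" "card {v \<in> leaves1. h v \<noteq> g v} \<le> b"
    using card_mono[OF finite_leaves(1), of "{v \<in> leaves0. h v \<noteq> g v}"]
      card_mono[OF finite_leaves(2), of "{v \<in> leaves1. h v \<noteq> g v}"] by auto
  then show ?thesis
    by (simp add: route_cost_single)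
qed

lemma route_cost_adjacent_le:
  shows "fst d \<noteq> fst c \<Longrightarrow> snd d = snd c \<Longrightarrow> route_cost g h [c, d] \<le> 1 + 2 * a + b"
    and "fst d = fst c \<Longrightarrow> route_cost g h [c, d] \<le> 1 + a + 2 * b"
proof -
  have le2: "(\<Sum>v\<in>A. leaf_moves [e, e'] (h v) (g v)) \<le> 2 * card A" for A e e'
    by (rule sum_le_card_mult) simp
  have le1: "(\<Sum>v\<in>A. leaf_moves [e, e'] (h v) (g v)) \<le> 1 * card A" if "fst e = fst e'" for A e e'
    by (rule sum_le_card_mult) (simp add: that)
  show "fst d \<noteq> fst c \<Longrightarrow> snd d = snd c \<Longrightarrow> route_cost g h [c, d] \<le> 1 + 2 * a + b"
    using le2[where A = leaves0 and e = c and e' = d]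
      le1[where A = leaves1 and e = "prod.swap c" and e' = "prod.swap d"] by (simp add: route_cost_def)
  show "fst d = fst c \<Longrightarrow> route_cost g h [c, d] \<le> 1 + a + 2 * b"
    using le1[where A = leaves0 and e = c and e' = d]
      le2[where A = leaves1 and e = "prod.swap c" and e' = "prod.swap d"] by (simp add: route_cost_def)
qed

lemma route_cost_arcs_far:
  assumes h: "dstar_proper h" and g: "dstar_proper g"
    and far: "centre h \<noteq> centre g" "\<not> hex_adj (centre h) (centre g)"
  shows "route_cost g h (arc True (centre h) (centre g)) + route_cost g h (arc False (centre h) (centre g))
           \<le> 6 + 3 * (a + b)"
proof -
  let ?c = "centre h" and ?T = "centre g"
  have cT: "centre_col ?c" "centre_col ?T"
    using h g by (simp_all add: centre_col_centre)
  have "(\<Sum>v\<in>leaves0. leaf_moves (arc True ?c ?T) (h v) (g v) + leaf_moves (arc False ?c ?T) (h v) (g v))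
          \<le> 3 * card leaves0"
    by (rule sum_le_card_mult, rule leaf_moves_arcs_far[OF cT far])
      (use h g in \<open>auto simp: dstar_proper_iff mem_leaves_iff centre_def\<close>)
  moreover have "(\<Sum>v\<in>leaves1. leaf_moves (map prod.swap (arc True ?c ?T)) (h v) (g v)
          + leaf_moves (map prod.swap (arc False ?c ?T)) (h v) (g v)) \<le> 3 * card leaves1"
    by (rule sum_le_card_mult, rule leaf_moves_swap_arcs_far[OF cT far])
      (use h g in \<open>auto simp: dstar_proper_iff mem_leaves_iff centre_def\<close>)
  moreover have "length (arc True ?c ?T) + length (arc False ?c ?T) = 8"
    by (rule length_arcs_far[OF cT far])
  moreover have "0 < length (arc True ?c ?T)" "0 < length (arc False ?c ?T)"
    by simp_all
  ultimately show ?thesis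
    unfolding route_cost_def sum.distrib card_leaves by arith
qed

lemma col_dist_dstar_le:
  assumes f: "dstar_proper f" and g: "dstar_proper g" and balanced: "a \<le> b + 4" "b \<le> a + 4"
  shows "col_dist (dstar_V a b) (dstar_E a b) f g \<le> enat (3 * (a + b + 2) div 2)"
proof -
  let ?c = "centre f" and ?T = "centre g" and ?B = "3 * (a + b + 2) div 2"
  have cT: "centre_col ?c" "centre_col ?T"
    using f g by (simp_all add: centre_col_centre)
  have "\<exists>cs. hex_walk cs \<and> hd cs = ?c \<and> last cs = ?T \<and> route_cost g f cs \<le> ?B"
  proof (cases "?c = ?T")
    case True
    then show ?thesis
      using cT route_cost_single_le[of g f ?c] by (intro exI[of _ "[?c]"]) auto
  next
    case distinct: False
    show ?thesis
    proof (cases "hex_adj ?c ?T")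
      case True
      then have "route_cost g f [?c, ?T] \<le> 1 + 2 * a + b \<or> route_cost g f [?c, ?T] \<le> 1 + a + 2 * b"
        using hex_adj_iff[OF cT] route_cost_adjacent_le by blast
      then show ?thesis
        using cT True balanced by (intro exI[of _ "[?c, ?T]"]) auto
    next
      case False
      then have "route_cost g f (arc True ?c ?T) + route_cost g f (arc False ?c ?T) \<le> 6 + 3 * (a + b)"
        by (rule route_cost_arcs_far[OF f g distinct])
      moreover have "6 + 3 * (a + b) \<le> 2 * ?B + 1"
        by presburger
      ultimately have "route_cost g f (arc True ?c ?T) \<le> ?B \<or> route_cost g f (arc False ?c ?T) \<le> ?B"
        by linarith
      then show ?thesis
        using hex_walk_arc[OF cT] by blast
    qed
  qed
  then show ?thesis
    using col_dist_le_route_cost[OF f g] by (meson enat_ord_simps(1) order_trans)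
qed

section \<open>Lower bound\<close>

lemma route_cost_change_one_le:
  assumes "\<And>u. u \<noteq> v \<Longrightarrow> h u = h' u"
  shows "route_cost g h cs \<le> Suc (route_cost g h' cs)"
proof -
  have "(\<Sum>u\<in>leaves0. leaf_moves cs (h u) (g u))
      \<le> (\<Sum>u\<in>leaves0. leaf_moves cs (h' u) (g u)) + of_bool (v \<in> leaves0)"
    using assms leaf_moves_le_Suc by (intro sum_le_sum_plus_of_bool) auto
  moreover have "(\<Sum>u\<in>leaves1. leaf_moves (map prod.swap cs) (h u) (g u))
      \<le> (\<Sum>u\<in>leaves1. leaf_moves (map prod.swap cs) (h' u) (g u)) + of_bool (v \<in> leaves1)"
    using assms leaf_moves_le_Suc by (intro sum_le_sum_plus_of_bool) auto
  moreover have "of_bool (v \<in> leaves0) + of_bool (v \<in> leaves1) \<le> (1::nat)"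
    by (auto simp: mem_leaves_iff)
  ultimately show ?thesis
    unfolding route_cost_def by linarith
qed

text \<open>A leaf avoids its centre's colour both before and after a centre move, so with three
  colours it already has the colour that the move forces on it.\<close>
lemma route_cost_centre_step:
  assumes h: "dstar_proper h" and h': "dstar_proper h'" and one_centre: "h 0 = h' 0 \<or> h 1 = h' 1"
    and leaves: "\<And>u. u \<notin> {0, 1} \<Longrightarrow> h u = h' u"
  shows "route_cost g h (centre h # centre h' # cs) = Suc (route_cost g h' (centre h' # cs))"
proof -
  have col: "h 0 < 3" "h 1 < 3" "h' 0 < 3" "h' 1 < 3" "h 0 \<noteq> h 1" "h' 0 \<noteq> h' 1"
    using h h' by (simp_all add: dstar_proper_iff)
  have "leaf_moves (centre h # centre h' # cs) (h u) (g u) = leaf_moves (centre h' # cs) (h' u) (g u)"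
    if "u \<in> leaves0" for u
  proof -
    have u: "u \<notin> {0, 1}" "h u < 3" "h u \<noteq> h 0" "h' u \<noteq> h' 0"
      using that h h' by (auto simp: dstar_proper_iff mem_leaves_iff)
    have "h 0 = h' 0 \<or> h u = h 1"
      using one_centre u col leaves[OF u(1)] third_colour[of "h 0" "h' 0" "h 1" "h u"] by auto
    then have "leaf_moves (centre h # centre h' # cs) (h u) (g u) = leaf_moves (centre h' # cs) (h u) (g u)"
      using u leaves[OF u(1)] by (intro leaf_moves_Cons_skip) (auto simp: centre_def)
    then show ?thesis
      using leaves[OF u(1)] by simp
  qed
  moreover have "leaf_moves (map prod.swap (centre h # centre h' # cs)) (h u) (g u)
      = leaf_moves (map prod.swap (centre h' # cs)) (h' u) (g u)" if "u \<in> leaves1" for u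
  proof -
    have u: "u \<notin> {0, 1}" "h u < 3" "h u \<noteq> h 1" "h' u \<noteq> h' 1"
      using that h h' by (auto simp: dstar_proper_iff mem_leaves_iff)
    have "h 1 = h' 1 \<or> h u = h 0"
      using one_centre u col leaves[OF u(1)] third_colour[of "h 1" "h' 1" "h 0" "h u"] by auto
    then have "leaf_moves (map prod.swap (centre h # centre h' # cs)) (h u) (g u)
        = leaf_moves (map prod.swap (centre h' # cs)) (h u) (g u)"
      unfolding list.map using u leaves[OF u(1)] by (intro leaf_moves_Cons_skip) (auto simp: centre_def)
    then show ?thesis
      using leaves[OF u(1)] by simp
  qed
  ultimately show ?thesis
    unfolding route_cost_def by (simp cong: sum.cong)
qed

lemma route_cost_single_le_route_cost:
  assumes "\<And>u. u \<notin> {0, 1} \<Longrightarrow> h u = h' u" "cs \<noteq> []"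
  shows "route_cost g h [c] \<le> route_cost g h' cs"
proof -
  have "(\<Sum>u\<in>leaves0. leaf_moves [c] (h u) (g u)) \<le> (\<Sum>u\<in>leaves0. leaf_moves cs (h' u) (g u))"
    using assms of_bool_le_leaf_moves by (intro sum_mono) (auto simp: mem_leaves_iff)
  moreover have "(\<Sum>u\<in>leaves1. leaf_moves [prod.swap c] (h u) (g u))
      \<le> (\<Sum>u\<in>leaves1. leaf_moves (map prod.swap cs) (h' u) (g u))"
    using assms of_bool_le_leaf_moves by (intro sum_mono) (auto simp: mem_leaves_iff)
  ultimately show ?thesis
    unfolding route_cost_def by simp
qed

lemma route_cost_arc_step:
  assumes g: "dstar_proper g" and h: "dstar_proper h" and h': "dstar_proper h'"
    and one_centre: "h 0 = h' 0 \<or> h 1 = h' 1" and leaves: "\<And>u. u \<notin> {0, 1} \<Longrightarrow> h u = h' u"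
    and step: "centre h' = hex_step fwd (centre h)" and "centre h \<noteq> centre g"
  shows "route_cost g h (arc fwd (centre h) (centre g)) = Suc (route_cost g h' (arc fwd (centre h') (centre g)))"
proof -
  let ?cs = "arc fwd (centre h') (centre g)"
  have cT: "centre_col (centre h)" "centre_col (centre h')" "centre_col (centre g)"
    using g h h' by (simp_all add: centre_col_centre)
  have "hd ?cs = centre h'"
    using hex_walk_arc[OF cT(2,3)] by blast
  then obtain cs where "?cs = centre h' # cs"
    by (cases ?cs) auto
  moreover have "arc fwd (centre h) (centre g) = centre h # ?cs"
    using arc_Cons[OF cT(1,3) assms(7)] step by simp
  ultimately show ?thesis
    using route_cost_centre_step[OF h h' one_centre leaves, of g cs] by simp
qed

definition potential :: "(nat \<Rightarrow> nat) \<Rightarrow> (nat \<Rightarrow> nat) \<Rightarrow> nat" where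
  "potential g h = min (route_cost g h (arc True (centre h) (centre g)))
                       (route_cost g h (arc False (centre h) (centre g)))"

lemma potential_le_route_cost: "potential g h \<le> route_cost g h (arc fwd (centre h) (centre g))"
  by (cases fwd) (simp_all add: potential_def)

lemma potential_eq_route_cost: "\<exists>fwd. potential g h = route_cost g h (arc fwd (centre h) (centre g))"
  by (metis potential_def min_def)

lemma potential_self: "potential g g = 0"
  using potential_le_route_cost[of g g True] by (simp add: route_cost_single)

lemma potential_centre_move_le:
  assumes g: "dstar_proper g" and h: "dstar_proper h" and h': "dstar_proper h'"
    and one_centre: "h 0 = h' 0 \<or> h 1 = h' 1" and leaves: "\<And>u. u \<notin> {0, 1} \<Longrightarrow> h u = h' u"
    and moved: "centre h \<noteq> centre h'"
  shows "potential g h \<le> Suc (potential g h')"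
proof -
  let ?c = "centre h" and ?c' = "centre h'" and ?T = "centre g"
  obtain fwd where opt: "potential g h' = route_cost g h' (arc fwd ?c' ?T)"
    using potential_eq_route_cost by blast
  have "hex_adj ?c ?c'"
    using h h' one_centre moved by (rule hex_adj_centre)
  then obtain d where d: "?c' = hex_step d ?c"
    unfolding hex_adj_def by blast
  \<comment> \<open>The arc of h in the optimal direction fwd of h' is one step longer than that of h' when
    fwd = d, and one step shorter otherwise, unless one of the two centre pairs is the target.\<close>
  consider "?c = ?T" | "?c \<noteq> ?T" "fwd = d \<or> ?c' = ?T" | "?c' \<noteq> ?T" "fwd = (\<not> d)"
    by blast
  then show ?thesis
  proof cases
    case 1
    then have "potential g h \<le> route_cost g h [?T]"
      using potential_le_route_cost[of g h fwd] by simp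
    also have "\<dots> \<le> potential g h'"
      using route_cost_single_le_route_cost[OF leaves] opt by simp
    finally show ?thesis
      by simp
  next
    case 2
    then have "arc d ?c' ?T = arc fwd ?c' ?T"
      by auto
    then have "route_cost g h (arc d ?c ?T) = Suc (potential g h')"
      using route_cost_arc_step[OF g h h' one_centre leaves d 2(1)] opt by simp
    then show ?thesis
      using potential_le_route_cost[of g h d] by simp
  next
    case 3
    have one_centre': "h' 0 = h 0 \<or> h' 1 = h 1"
      using one_centre by auto
    have leaves': "h' u = h u" if "u \<notin> {0, 1}" for u
      using leaves[OF that] by simp
    have "?c = hex_step fwd ?c'"
      using d hex_step_inverse[OF centre_col_centre[OF h]] 3(2) by simp
    from route_cost_arc_step[OF g h' h one_centre' leaves' this 3(1)]
    have "route_cost g h' (arc fwd ?c' ?T) = Suc (route_cost g h (arc fwd ?c ?T))" .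
    then show ?thesis
      using potential_le_route_cost[of g h fwd] opt by simp
  qed
qed

lemma potential_adj_le:
  assumes g: "dstar_proper g" and adj: "col_adj (dstar_V a b) (dstar_E a b) h h'"
  shows "potential g h \<le> Suc (potential g h')"
proof -
  have h: "dstar_proper h" and h': "dstar_proper h'"
    using adj by (simp_all add: col_adj_def)
  obtain v where v: "{u \<in> dstar_V a b. h u \<noteq> h' u} = {v}"
    using adj by (auto simp: col_adj_def card_1_singleton_iff)
  then have changed: "h v \<noteq> h' v"
    by blast
  have only_v: "h u = h' u" if "u \<noteq> v" for u
    using that v proper_3col_diff_subset[OF h h'] by blast
  show ?thesis
  proof (cases "v \<in> {0, 1}")
    case False
    obtain fwd where opt: "potential g h' = route_cost g h' (arc fwd (centre h') (centre g))"
      using potential_eq_route_cost by blast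
    have "centre h = centre h'"
      using False only_v by (auto simp: centre_def)
    then have "potential g h \<le> route_cost g h (arc fwd (centre h') (centre g))"
      using potential_le_route_cost[of g h fwd] by simp
    also have "\<dots> \<le> Suc (potential g h')"
      using route_cost_change_one_le[OF only_v] opt by simp
    finally show ?thesis .
  next
    case True
    then have "h 0 = h' 0 \<or> h 1 = h' 1" "centre h \<noteq> centre h'"
      using only_v changed by (auto simp: centre_def)
    moreover have "h u = h' u" if "u \<notin> {0, 1}" for u
      using only_v that True by auto
    ultimately show ?thesis
      using potential_centre_move_le[OF g h h'] by blast
  qed
qed

lemma potential_le_col_dist:
  "dstar_proper g \<Longrightarrow> enat (potential g f) \<le> col_dist (dstar_V a b) (dstar_E a b) f g"
  by (rule col_dist_ge_potential) (simp_all add: potential_adj_le potential_self)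

text \<open>The first k leaves (counting from vertex 2) have to be recoloured twice on the forward arc
  from (0,1) to (1,2), the remaining ones twice on the backward arc.\<close>
definition extremal_source :: "nat \<Rightarrow> nat \<Rightarrow> nat" where
  "extremal_source k v = (if v = 0 then 0 else if v = 1 then 1 else if v \<le> a+1 then 1 else
     if v \<le> a+b+1 then (if v \<le> k+1 then 2 else 0) else 0)"

definition extremal_target :: "nat \<Rightarrow> nat \<Rightarrow> nat" where
  "extremal_target k v = (if v = 0 then 1 else if v = 1 then 2 else
     if v \<le> a+1 then (if v \<le> k+1 then 0 else 2) else if v \<le> a+b+1 then 1 else 0)"

lemma dstar_proper_extremal: "dstar_proper (extremal_source k)" "dstar_proper (extremal_target k)"
  by (auto simp: dstar_proper_iff mem_leaves_iff extremal_source_def extremal_target_def)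

lemma route_costs_extremal:
  assumes "k \<le> a + b"
  defines "f \<equiv> extremal_source k" and "g \<equiv> extremal_target k"
  shows "route_cost g f (arc True (centre f) (centre g)) = 2 + (a + b) + k"
    and "route_cost g f (arc False (centre f) (centre g)) + k = 4 + 2 * (a + b)"
proof -
  define w :: "nat \<Rightarrow> nat" where "w v = (if v \<le> k + 1 then 2 else 1)" for v
  have "centre f = (0,1)" "centre g = (1,2)"
    by (simp_all add: f_def g_def centre_def extremal_source_def extremal_target_def)
  then have arcs: "arc True (centre f) (centre g) = [(0,1), (0,2), (1,2)]"
    "arc False (centre f) (centre g) = [(0,1), (2,1), (2,0), (1,0), (1,2)]"
    using arcs_01_12 by simp_all
  have "sum w {2..a+b+1} = (\<Sum>v\<in>{2..a+b+1}. 1) + (\<Sum>v\<in>{2..a+b+1}. of_bool (v \<le> k + 1))"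
    unfolding sum.distrib[symmetric] by (rule sum.cong) (auto simp: w_def)
  also have "(\<Sum>v\<in>{2..a+b+1}. of_bool (v \<le> k + 1)) = k"
    using card_initial_segment[OF assms(1)]
    by (simp only: card_filter_eq_sum_of_bool[OF finite_atLeastAtMost])
  finally have w: "sum w leaves0 + sum w leaves1 = a + b + k"
    unfolding sum_leaves by simp
  have "(\<Sum>v\<in>leaves0. leaf_moves [(0,1), (0,2), (1,2)] (f v) (g v)) = sum w leaves0"
    by (intro sum.cong refl) (auto simp: mem_leaves_iff f_def g_def extremal_source_def extremal_target_def w_def)
  moreover have "(\<Sum>v\<in>leaves1. leaf_moves [(1,0), (2,0), (2,1)] (f v) (g v)) = sum w leaves1"
    by (intro sum.cong refl) (auto simp: mem_leaves_iff f_def g_def extremal_source_def extremal_target_def w_def)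
  ultimately show "route_cost g f (arc True (centre f) (centre g)) = 2 + (a + b) + k"
    using w by (simp add: route_cost_def arcs)
  have "(\<Sum>v\<in>leaves0. leaf_moves [(0,1), (2,1), (2,0), (1,0), (1,2)] (f v) (g v) + w v) = (\<Sum>v\<in>leaves0. 3)"
    by (intro sum.cong refl) (auto simp: mem_leaves_iff f_def g_def extremal_source_def extremal_target_def w_def)
  moreover have "(\<Sum>v\<in>leaves1. leaf_moves [(1,0), (1,2), (0,2), (0,1), (2,1)] (f v) (g v) + w v) = (\<Sum>v\<in>leaves1. 3)"
    by (intro sum.cong refl) (auto simp: mem_leaves_iff f_def g_def extremal_source_def extremal_target_def w_def)
  moreover have "route_cost g f (arc False (centre f) (centre g)) + (sum w leaves0 + sum w leaves1)
      = 4 + ((\<Sum>v\<in>leaves0. leaf_moves [(0,1), (2,1), (2,0), (1,0), (1,2)] (f v) (g v) + w v)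
           + (\<Sum>v\<in>leaves1. leaf_moves [(1,0), (1,2), (0,2), (0,1), (2,1)] (f v) (g v) + w v))"
    unfolding route_cost_def arcs sum.distrib by simp
  ultimately show "route_cost g f (arc False (centre f) (centre g)) + k = 4 + 2 * (a + b)"
    using w by simp
qed

lemma potential_extremal:
  assumes "1 \<le> a" "1 \<le> b"
  defines "k \<equiv> 1 + (a + b) div 2"
  shows "3 * (a + b + 2) div 2 \<le> potential (extremal_target k) (extremal_source k)"
proof -
  let ?f = "extremal_source k" and ?g = "extremal_target k"
  have k: "k \<le> a + b" "k + k \<le> a + b + 2" "3 * (a + b + 2) div 2 = 2 + (a + b) + k"
    using assms unfolding k_def by presburger+
  have "3 * (a + b + 2) div 2 \<le> route_cost ?g ?f (arc fwd (centre ?f) (centre ?g))" for fwd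
    using k route_costs_extremal[OF k(1)] by (cases fwd) simp_all
  then show ?thesis
    unfolding potential_def by simp
qed

end

theorem mainTheorem18:
  fixes a b n :: nat
  assumes "a \<ge> 1" and "b \<ge> 1" and "\<bar>int a - int b\<bar> \<le> 4" and "n = a + b + 2"
  shows "col_diam (dstar_V a b) (dstar_E a b) = enat ((3 * n) div 2)"
proof (rule antisym)
  show "col_diam (dstar_V a b) (dstar_E a b) \<le> enat ((3 * n) div 2)"
    unfolding col_diam_def using col_dist_dstar_le assms by (auto intro!: SUP_least)
next
  let ?k = "1 + (a + b) div 2"
  let ?f = "extremal_source a b ?k" and ?g = "extremal_target a b ?k"
  have "enat ((3 * n) div 2) \<le> col_dist (dstar_V a b) (dstar_E a b) ?f ?g"
    using potential_extremal[OF assms(1,2)] potential_le_col_dist[OF dstar_proper_extremal(2)] assms(4)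
    by (meson enat_ord_simps(1) order_trans)
  also have "\<dots> \<le> col_diam (dstar_V a b) (dstar_E a b)"
    unfolding col_diam_def using dstar_proper_extremal by (intro SUP_upper2[of "(?f, ?g)"]) auto
  finally show "enat ((3 * n) div 2) \<le> col_diam (dstar_V a b) (dstar_E a b)" .
qed

end
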